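(* In the setting described in the context, for any $a_1,a_2\in\mathfrak{z}$ and any positive integer $q$, $$\mathrm{S}^r(a_1a_2^q)=\sum_{\substack{i,j\geq 0\\ i+j\le q}}(-1)^i r^{q-j}(1-r)^j\, a_2^i a_1 a_2^j\ast \mathrm{S}(a_2^{q-i-j}),$$ where $\mathrm{S}=\mathrm{S}^1$. Equivalently, for a formal variable $u$, $\mathrm{S}^r\!\left(a_1\frac{1}{1-a_2u}\right)=\frac{1}{1+a_2ru}\,a_1\,\frac{1}{1-a_2(1-r)u}\ast \mathrm{S}\!\left(\frac{1}{1-a_2ru}\right)$.
   Context: $\mathfrak{A}$ is a commutative $\mathbb{Q}$-algebra, $A$ a set of non-commutative letters, $\mathfrak{h}^1$ the non-commutative polynomial algebra over $\mathfrak{A}$ generated by $A$, and $\mathfrak{z}$ the $\mathfrak{A}$-span of $A$, equipped with a commutative (not necessarily unital) $\mathfrak{A}$-algebra product $\circ$. This acts on $\mathfrak{h}^1$ by $\mathfrak{A}$-linearity and $a\circ 1_w=0$, $a\circ(bw)=(a\circ b)w$ ($a,b\in A$, $w$ a word, $1_w$ the empty word). The harmonic product $\ast$ on $\mathfrak{h}^1$ is the $\mathfrak{A}$-bilinear product with $1_w\ast w=w\ast 1_w=w$ and $aw_1\ast bw_2=a(w_1\ast bw_2)+b(aw_1\ast w_2)+(a\circ b)(w_1\ast w_2)$ for $a,b\in A$ and words $w,w_1,w_2$ (extended $r$-linearly and to formal power series in $u$). For a variable $r$, $\mathrm{S}^r$ is the $\mathfrak{A}[r]$-linear map on $\mathfrak{h}^1[r]$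 with $\mathrm{S}^r(1_w)=1_w$ and $\mathrm{S}^r(aw)=a\mathrm{S}^r(w)+r\,a\circ\mathrm{S}^r(w)$ for $a\in A$ and words $w$; $\mathrm{S}:=\mathrm{S}^1$. Juxtaposition is concatenation; $a^n$ is the $n$-fold concatenation power ($a^0=1_w$). *)

theory Defs
  imports "HOL-Library.Poly_Mapping"
begin

(* Elements of h1 (non-commutative polynomials over the coefficient ring 'k in
the letters of type 'a) are finitely supported functions from words to 'k,
i.e. values of type ('a list <Rightarrow><^sub>0 'k).  Elements of z (the span of the letters)
are values of type ('a <Rightarrow><^sub>0 'k). *)

definition smul :: "'k::comm_ring_1 \<Rightarrow> ('b \<Rightarrow>\<^sub>0 'k) \<Rightarrow> ('b \<Rightarrow>\<^sub>0 'k)" where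
  "smul c p = Poly_Mapping.map (\<lambda>x. c * x) p"

definition lin :: "('b \<Rightarrow> ('c \<Rightarrow>\<^sub>0 'k::comm_ring_1)) \<Rightarrow> ('b \<Rightarrow>\<^sub>0 'k) \<Rightarrow> ('c \<Rightarrow>\<^sub>0 'k)" where
  "lin f p = (\<Sum>x\<in>Poly_Mapping.keys p. smul (Poly_Mapping.lookup p x) (f x))"

definition wrd :: "'a list \<Rightarrow> ('a list \<Rightarrow>\<^sub>0 'k::comm_ring_1)" where
  "wrd w = Poly_Mapping.single w 1"

definition emb :: "('a \<Rightarrow>\<^sub>0 'k::comm_ring_1) \<Rightarrow> ('a list \<Rightarrow>\<^sub>0 'k)" where
  "emb z = lin (\<lambda>a. wrd [a]) z"

definition conc :: "('a list \<Rightarrow>\<^sub>0 'k::comm_ring_1) \<Rightarrow> ('a list \<Rightarrow>\<^sub>0 'k) \<Rightarrow> ('a list \<Rightarrow>\<^sub>0 'k)" where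
  "conc p q = lin (\<lambda>v. lin (\<lambda>w. wrd (v @ w)) q) p"

primrec zpow :: "('a \<Rightarrow>\<^sub>0 'k::comm_ring_1) \<Rightarrow> nat \<Rightarrow> ('a list \<Rightarrow>\<^sub>0 'k)" where
  "zpow z 0 = wrd []"
| "zpow z (Suc n) = conc (emb z) (zpow z n)"

definition prep :: "'a \<Rightarrow> ('a list \<Rightarrow>\<^sub>0 'k::comm_ring_1) \<Rightarrow> ('a list \<Rightarrow>\<^sub>0 'k)" where
  "prep a p = lin (\<lambda>w. wrd (a # w)) p"

(* The product <circ> on z is given on letters by a function from pairs of letters to z;
its bilinear extension to z: *)
definition zcirc :: "('a \<Rightarrow> 'a \<Rightarrow> ('a \<Rightarrow>\<^sub>0 'k::comm_ring_1)) \<Rightarrow> ('a \<Rightarrow>\<^sub>0 'k) \<Rightarrow> ('a \<Rightarrow>\<^sub>0 'k) \<Rightarrow> ('a \<Rightarrow>\<^sub>0 'k)" where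
  "zcirc circ x y = lin (\<lambda>a. lin (\<lambda>b. circ a b) y) x"

definition comm_circ :: "('a \<Rightarrow> 'a \<Rightarrow> ('a \<Rightarrow>\<^sub>0 'k::comm_ring_1)) \<Rightarrow> bool" where
  "comm_circ circ \<longleftrightarrow>
     (\<forall>a b. circ a b = circ b a) \<and>
     (\<forall>x y z. zcirc circ (zcirc circ x y) z = zcirc circ x (zcirc circ y z))"

fun actw :: "('a \<Rightarrow> 'a \<Rightarrow> ('a \<Rightarrow>\<^sub>0 'k::comm_ring_1)) \<Rightarrow> 'a \<Rightarrow> 'a list \<Rightarrow> ('a list \<Rightarrow>\<^sub>0 'k)" where
  "actw circ a [] = 0"
| "actw circ a (b # w) = lin (\<lambda>c. wrd (c # w)) (circ a b)"

definition act :: "('a \<Rightarrow> 'a \<Rightarrow> ('a \<Rightarrow>\<^sub>0 'k::comm_ring_1)) \<Rightarrow> 'a \<Rightarrow> ('a list \<Rightarrow>\<^sub>0 'k) \<Rightarrow> ('a list \<Rightarrow>\<^sub>0 'k)" where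
  "act circ a p = lin (actw circ a) p"

function harmw :: "('a \<Rightarrow> 'a \<Rightarrow> ('a \<Rightarrow>\<^sub>0 'k::comm_ring_1)) \<Rightarrow> 'a list \<Rightarrow> 'a list \<Rightarrow> ('a list \<Rightarrow>\<^sub>0 'k)" where
  "harmw circ [] w = wrd w"
| "harmw circ (a # v) [] = wrd (a # v)"
| "harmw circ (a # v) (b # w) =
     prep a (harmw circ v (b # w)) + prep b (harmw circ (a # v) w)
     + lin (\<lambda>c. prep c (harmw circ v w)) (circ a b)"
  by pat_completeness auto
termination by (relation "measure (\<lambda>(_, v, w). length v + length w)") auto

definition harm :: "('a \<Rightarrow> 'a \<Rightarrow> ('a \<Rightarrow>\<^sub>0 'k::comm_ring_1)) \<Rightarrow> ('a list \<Rightarrow>\<^sub>0 'k) \<Rightarrow> ('a list \<Rightarrow>\<^sub>0 'k) \<Rightarrow> ('a list \<Rightarrow>\<^sub>0 'k)" where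
  "harm circ p q = lin (\<lambda>v. lin (\<lambda>w. harmw circ v w) q) p"

primrec Srw :: "('a \<Rightarrow> 'a \<Rightarrow> ('a \<Rightarrow>\<^sub>0 'k::comm_ring_1)) \<Rightarrow> 'k \<Rightarrow> 'a list \<Rightarrow> ('a list \<Rightarrow>\<^sub>0 'k)" where
  "Srw circ r [] = wrd []"
| "Srw circ r (a # w) = prep a (Srw circ r w) + smul r (act circ a (Srw circ r w))"

definition Sr :: "('a \<Rightarrow> 'a \<Rightarrow> ('a \<Rightarrow>\<^sub>0 'k::comm_ring_1)) \<Rightarrow> 'k \<Rightarrow> ('a list \<Rightarrow>\<^sub>0 'k) \<Rightarrow> ('a list \<Rightarrow>\<^sub>0 'k)" where
  "Sr circ r p = lin (Srw circ r) p"

end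

theory Submission
  imports Defs "HOL-Library.Function_Algebras"
begin

(* Identify power series in u with their coefficient sequences; series with coefficients
in z multiply those with coefficients in h1 from the left by concatenation.  If x has no
constant term, X = 1 + x X determines X, which is 1/(1 - x), and the recursion of the
harmonic product gives 1/(1 - x) * 1/(1 - y) = 1/(1 - (x + y + x \<circ> y)).

Expanding S^r letter by letter gives S^r(1/(1 - a2 u)) = 1/(1 - e) with
e = \<Sum>_{l\<ge>1} r^(l-1) a2^\<circ>l u^l, and S^r(a1/(1 - a2 u)) = (\<Sum>_l r^l a1 \<circ> a2^\<circ>l u^l) S^r(1/(1 - a2 u)).
Let C = 1/(1 - (1-r) a2 u) and G = S(1/(1 - r a2 u)) = 1/(1 - \<beta>).  Since
(1-r) a2 u + \<beta> + (1-r) a2 u \<circ> \<beta> = e, C * G = S^r(1/(1 - a2 u)).  The left factor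
A = 1/(1 + r a2 u) a1 C satisfies A = a1 C - r a2 u A, and -r a2 u is the \<circ>-inverse of \<beta>;
hence A * G = (a1 + a1 \<circ> \<beta>) (C * G), which is S^r(a1/(1 - a2 u)). *)

section \<open>Linear combinations\<close>

lemma lookup_smul [simp]: "Poly_Mapping.lookup (smul c p) x = c * Poly_Mapping.lookup p x"
  unfolding smul_def by transfer (simp add: when_def)

lemma keys_smul: "Poly_Mapping.keys (smul c p) \<subseteq> Poly_Mapping.keys p"
  by (auto simp: in_keys_iff)

lemma smul_add_right: "smul c (p + q) = smul c p + smul c q"
  by (rule poly_mapping_eqI) (simp add: lookup_add algebra_simps)

lemma smul_add_left: "smul (c + d) p = smul c p + smul d p"
  by (rule poly_mapping_eqI) (simp add: lookup_add algebra_simps)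

lemma smul_smul [simp]: "smul c (smul d p) = smul (c * d) p"
  by (rule poly_mapping_eqI) (simp add: algebra_simps)

lemma smul_one [simp]: "smul 1 p = p"
  by (rule poly_mapping_eqI) simp

lemma smul_zero_left [simp]: "smul 0 p = 0"
  by (rule poly_mapping_eqI) simp

lemma smul_zero_right [simp]: "smul c 0 = 0"
  by (rule poly_mapping_eqI) simp

lemma smul_minus_right: "smul c (- p) = - smul c p"
  by (rule poly_mapping_eqI) simp

lemma smul_minus_left: "smul (- c) p = - smul c p"
  by (rule poly_mapping_eqI) simp

lemma smul_diff_right: "smul c (p - q) = smul c p - smul c q"
  by (rule poly_mapping_eqI) (simp add: lookup_minus algebra_simps)

lemma smul_sum: "smul c (sum f I) = (\<Sum>i\<in>I. smul c (f i))"
  by (induction I rule: infinite_finite_induct) (auto simp: smul_add_right)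

lemma smul_single: "smul c (Poly_Mapping.single x d) = Poly_Mapping.single x (c * d)"
  by (rule poly_mapping_eqI) (simp add: lookup_single when_def)

lemma lin_eq_sum:
  assumes "finite S" "Poly_Mapping.keys p \<subseteq> S"
  shows "lin f p = (\<Sum>x\<in>S. smul (Poly_Mapping.lookup p x) (f x))"
  unfolding lin_def
  by (rule sum.mono_neutral_left) (use assms in \<open>auto simp: in_keys_iff\<close>)

lemma lin_add [simp]: "lin f (p + q) = lin f p + lin f q"
proof -
  let ?S = "Poly_Mapping.keys p \<union> Poly_Mapping.keys q"
  have "Poly_Mapping.keys (p + q) \<subseteq> ?S" by (rule keys_add)
  then show ?thesis
    by (simp add: lin_eq_sum[of ?S] lookup_add smul_add_left sum.distrib)
qed

lemma lin_smul [simp]: "lin f (smul c p) = smul c (lin f p)"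
  by (simp add: lin_eq_sum[of "Poly_Mapping.keys p"] keys_smul smul_sum mult.commute)

lemma lin_zero [simp]: "lin f 0 = 0"
  by (simp add: lin_def)

lemma lin_minus [simp]: "lin f (- p) = - lin f p"
proof -
  have "lin f (- p) + lin f p = 0" by (simp flip: lin_add)
  then show ?thesis by (simp add: eq_neg_iff_add_eq_0)
qed

lemma lin_diff [simp]: "lin f (p - q) = lin f p - lin f q"
  by (metis diff_conv_add_uminus lin_add lin_minus)

lemma lin_sum [simp]: "lin f (sum g I) = (\<Sum>i\<in>I. lin f (g i))"
  by (induction I rule: infinite_finite_induct) auto

lemma lin_single [simp]: "lin f (Poly_Mapping.single x c) = smul c (f x)"
  by (simp add: lin_eq_sum[of "{x}"] lookup_single)

lemma lin_wrd [simp]: "lin f (wrd w) = f w"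
  by (simp add: wrd_def)

lemma lin_add_fun [simp]: "lin (\<lambda>x. f x + g x) p = lin f p + lin g p"
  by (simp add: lin_def smul_add_right sum.distrib)

lemma lin_zero_fun [simp]: "lin (\<lambda>x. 0) p = 0"
  by (simp add: lin_def)

lemma lin_minus_fun [simp]: "lin (\<lambda>x. - f x) p = - lin f p"
  by (simp add: lin_def smul_minus_right sum_negf)

lemma lin_diff_fun [simp]: "lin (\<lambda>x. f x - g x) p = lin f p - lin g p"
  by (simp add: lin_def smul_diff_right sum_subtractf)

lemma smul_lin: "smul c (lin f p) = lin (\<lambda>x. smul c (f x)) p"
  by (simp add: lin_def smul_sum mult.commute)

lemma lin_sum_fun [simp]: "lin (\<lambda>x. \<Sum>i\<in>I. F i x) p = (\<Sum>i\<in>I. lin (F i) p)"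
  by (simp add: lin_def smul_sum sum.swap[of _ I])

lemma lin_lin [simp]: "lin g (lin f p) = lin (\<lambda>x. lin g (f x)) p"
proof -
  have "lin g (lin f p) = (\<Sum>x\<in>Poly_Mapping.keys p. smul (Poly_Mapping.lookup p x) (lin g (f x)))"
    by (simp only: lin_def[of f p] lin_sum lin_smul)
  then show ?thesis by (simp add: lin_def[of "\<lambda>x. lin g (f x)"])
qed

lemma lin_swap: "lin (\<lambda>u. lin (\<lambda>v. F u v) B) A = lin (\<lambda>v. lin (\<lambda>u. F u v) A) B"
  by (simp add: lin_def smul_sum sum.swap[of _ "Poly_Mapping.keys A"] mult.commute)

lemma lin_swap_inner:
  "lin (\<lambda>c. lin (\<lambda>v. lin (\<lambda>w. K c v w) q) p) A = lin (\<lambda>v. lin (\<lambda>w. lin (\<lambda>c. K c v w) A) q) p"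
  by (subst lin_swap) (subst lin_swap, rule refl)

lemma lin_wrd_self [simp]: "lin wrd p = p"
  by (rule poly_mapping_eqI)
     (simp add: lin_def wrd_def lookup_sum smul_single lookup_single when_def in_keys_iff)

section \<open>Concatenation, the product \<circ> and the harmonic product\<close>

lemma conc_add_left [simp]: "conc (p + p') q = conc p q + conc p' q" by (simp add: conc_def)
lemma conc_add_right [simp]: "conc p (q + q') = conc p q + conc p q'" by (simp add: conc_def)
lemma conc_smul_left [simp]: "conc (smul c p) q = smul c (conc p q)" by (simp add: conc_def)
lemma conc_smul_right [simp]: "conc p (smul c q) = smul c (conc p q)" by (simp add: conc_def smul_lin)
lemma conc_zero_left [simp]: "conc 0 q = 0" by (simp add: conc_def)
lemma conc_diff_right [simp]: "conc p (q - q') = conc p q - conc p q'" by (simp add: conc_def)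
lemma conc_sum_left [simp]: "conc (sum f I) q = (\<Sum>i\<in>I. conc (f i) q)" by (simp add: conc_def)
lemma conc_sum_right [simp]: "conc p (sum f I) = (\<Sum>i\<in>I. conc p (f i))" by (simp add: conc_def)
lemma conc_sum_sum: "conc (sum f I) (sum g J) = (\<Sum>i\<in>I. \<Sum>j\<in>J. conc (f i) (g j))"
  unfolding conc_sum_left by (simp only: conc_sum_right)
lemma conc_wrd [simp]: "conc (wrd v) (wrd w) = wrd (v @ w)" by (simp add: conc_def)
lemma conc_Nil_left [simp]: "conc (wrd []) p = p" by (simp add: conc_def)
lemma conc_assoc: "conc (conc p q) s = conc p (conc q s)" by (simp add: conc_def)

lemma emb_add [simp]: "emb (x + y) = emb x + emb y" by (simp add: emb_def)
lemma emb_smul [simp]: "emb (smul c x) = smul c (emb x)" by (simp add: emb_def)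
lemma emb_zero [simp]: "emb 0 = 0" by (simp add: emb_def)
lemma emb_sum [simp]: "emb (sum f I) = (\<Sum>i\<in>I. emb (f i))" by (simp add: emb_def)

lemma conc_emb: "conc (emb x) p = lin (\<lambda>a. prep a p) x"
  by (simp add: conc_def emb_def prep_def)

lemma wrd_Cons: "wrd (c # w) = conc (emb (Poly_Mapping.single c 1)) (wrd w)"
  by (simp add: emb_def)

lemma zcirc_smul_left [simp]: "zcirc circ (smul c x) y = smul c (zcirc circ x y)" by (simp add: zcirc_def)
lemma zcirc_smul_right [simp]: "zcirc circ x (smul c y) = smul c (zcirc circ x y)" by (simp add: zcirc_def smul_lin)
lemma zcirc_zero_left [simp]: "zcirc circ 0 y = 0" by (simp add: zcirc_def)
lemma zcirc_zero_right [simp]: "zcirc circ x 0 = 0" by (simp add: zcirc_def)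
lemma zcirc_minus_left [simp]: "zcirc circ (- x) y = - zcirc circ x y" by (simp add: zcirc_def)

lemma harm_add_left [simp]: "harm circ (p + p') q = harm circ p q + harm circ p' q" by (simp add: harm_def)
lemma harm_add_right [simp]: "harm circ p (q + q') = harm circ p q + harm circ p q'" by (simp add: harm_def)
lemma harm_smul_left [simp]: "harm circ (smul c p) q = smul c (harm circ p q)" by (simp add: harm_def)
lemma harm_smul_right [simp]: "harm circ p (smul c q) = smul c (harm circ p q)" by (simp add: harm_def smul_lin)
lemma harm_zero_left [simp]: "harm circ 0 q = 0" by (simp add: harm_def)
lemma harm_zero_right [simp]: "harm circ p 0 = 0" by (simp add: harm_def)
lemma harm_sum_left [simp]: "harm circ (sum f I) q = (\<Sum>i\<in>I. harm circ (f i) q)" by (simp add: harm_def)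
lemma harm_sum_right [simp]: "harm circ p (sum f I) = (\<Sum>i\<in>I. harm circ p (f i))" by (simp add: harm_def)

lemma harm_sum_sum: "harm circ (sum f I) (sum g J) = (\<Sum>i\<in>I. \<Sum>j\<in>J. harm circ (f i) (g j))"
  unfolding harm_sum_left by (simp only: harm_sum_right)

lemma harmw_Nil_right [simp]: "harmw circ v [] = wrd v"
  by (cases v) auto

lemma harmw_Nil_left_fun [simp]: "harmw circ [] = wrd"
  by (rule ext) simp

lemma harm_Nil_left [simp]: "harm circ (wrd []) p = p" by (simp add: harm_def)
lemma harm_Nil_right [simp]: "harm circ p (wrd []) = p" by (simp add: harm_def)

lemma harm_conc_emb:
  "harm circ (conc (emb x) p) (conc (emb y) q) =
     conc (emb x) (harm circ p (conc (emb y) q)) + conc (emb y) (harm circ (conc (emb x) p) q)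
     + conc (emb (zcirc circ x y)) (harm circ p q)"
proof -
  have L: "harm circ (conc (emb x) p) (conc (emb y) q) =
     lin (\<lambda>a. lin (\<lambda>v. lin (\<lambda>b. lin (\<lambda>w. harmw circ (a # v) (b # w)) q) y) p) x"
    by (simp add: harm_def conc_emb prep_def)
  have T1: "conc (emb x) (harm circ p (conc (emb y) q)) =
     lin (\<lambda>a. lin (\<lambda>v. lin (\<lambda>b. lin (\<lambda>w. prep a (harmw circ v (b # w))) q) y) p) x"
    by (simp add: harm_def conc_emb prep_def)
  have T2: "conc (emb y) (harm circ (conc (emb x) p) q) =
     lin (\<lambda>a. lin (\<lambda>v. lin (\<lambda>b. lin (\<lambda>w. prep b (harmw circ (a # v) w)) q) y) p) x"
    by (simp add: harm_def conc_emb prep_def lin_swap[where B = y])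
  have T3: "conc (emb (zcirc circ x y)) (harm circ p q) =
     lin (\<lambda>a. lin (\<lambda>v. lin (\<lambda>b. lin (\<lambda>w. lin (\<lambda>c. prep c (harmw circ v w)) (circ a b)) q) y) p) x"
  proof -
    let ?K = "\<lambda>c v w. lin (\<lambda>u. wrd (c # u)) (harmw circ v w)"
    have "conc (emb (zcirc circ x y)) (harm circ p q) =
      lin (\<lambda>a. lin (\<lambda>b. lin (\<lambda>c. lin (\<lambda>v. lin (\<lambda>w. ?K c v w) q) p) (circ a b)) y) x"
      by (simp add: harm_def conc_emb prep_def zcirc_def)
    also have "\<dots> = lin (\<lambda>a. lin (\<lambda>b. lin (\<lambda>v. lin (\<lambda>w. lin (\<lambda>c. ?K c v w) (circ a b)) q) p) y) x"
      by (rule arg_cong[where f = "\<lambda>f. lin f x"], rule ext, rule arg_cong[where f = "\<lambda>f. lin f y"],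
          rule ext, rule lin_swap_inner)
    also have "\<dots> = lin (\<lambda>a. lin (\<lambda>v. lin (\<lambda>b. lin (\<lambda>w. lin (\<lambda>c. ?K c v w) (circ a b)) q) y) p) x"
      by (rule arg_cong[where f = "\<lambda>f. lin f x"], rule ext, rule lin_swap)
    finally show ?thesis by (simp add: prep_def)
  qed
  show ?thesis unfolding L T1 T2 T3 by simp
qed

section \<open>The action of z on h1 and the maps S^r\<close>

definition zact :: "('a \<Rightarrow> 'a \<Rightarrow> ('a \<Rightarrow>\<^sub>0 'k::comm_ring_1)) \<Rightarrow> ('a \<Rightarrow>\<^sub>0 'k) \<Rightarrow> ('a list \<Rightarrow>\<^sub>0 'k) \<Rightarrow> ('a list \<Rightarrow>\<^sub>0 'k)" where
  "zact circ x p = lin (\<lambda>a. act circ a p) x"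

lemma zact_zero [simp]: "zact circ x 0 = 0"
  by (simp add: zact_def act_def)

lemma zact_add_right [simp]: "zact circ x (p + p') = zact circ x p + zact circ x p'"
  by (simp add: zact_def act_def)

lemma zact_smul_right [simp]: "zact circ x (smul c p) = smul c (zact circ x p)"
  by (simp add: zact_def act_def smul_lin)

lemma zact_Nil [simp]: "zact circ x (wrd []) = 0"
  by (simp add: zact_def act_def)

lemma zact_lin: "zact circ x (lin f p) = lin (\<lambda>w. zact circ x (f w)) p"
  by (simp add: zact_def act_def lin_swap[where A = x])

lemma zact_conc_emb: "zact circ x (conc (emb y) p) = conc (emb (zcirc circ x y)) p"
proof -
  have "zact circ x (conc (emb y) p) =
      lin (\<lambda>a. lin (\<lambda>b. lin (\<lambda>w. lin (\<lambda>c. wrd (c # w)) (circ a b)) p) y) x"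
    by (simp add: zact_def act_def conc_emb prep_def)
  also have "\<dots> = lin (\<lambda>a. lin (\<lambda>b. lin (\<lambda>c. lin (\<lambda>w. wrd (c # w)) p) (circ a b)) y) x"
    by (rule arg_cong[where f = "\<lambda>f. lin f x"], rule ext, rule arg_cong[where f = "\<lambda>f. lin f y"],
        rule ext, rule lin_swap)
  also have "\<dots> = conc (emb (zcirc circ x y)) p"
    by (simp add: conc_emb prep_def zcirc_def)
  finally show ?thesis .
qed

lemma zact_zact:
  assumes assoc: "\<And>x y z. zcirc circ (zcirc circ x y) z = zcirc circ x (zcirc circ y z)"
  shows "zact circ x (zact circ y p) = zact circ (zcirc circ x y) p"
proof -
  have on_words: "zact circ x (zact circ y (wrd w)) = zact circ (zcirc circ x y) (wrd w)" for w
    by (cases w) (simp_all only: wrd_Cons zact_conc_emb assoc zact_Nil zact_zero)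
  have "zact circ x (zact circ y p) = lin (\<lambda>w. zact circ x (zact circ y (wrd w))) p"
    by (simp only: zact_lin[symmetric] lin_wrd_self)
  also have "\<dots> = zact circ (zcirc circ x y) p"
    by (simp only: on_words zact_lin[symmetric] lin_wrd_self)
  finally show ?thesis .
qed

lemma Sr_Nil [simp]: "Sr circ r (wrd []) = wrd []" by (simp add: Sr_def)

lemma Sr_conc_emb:
  "Sr circ r (conc (emb x) p) = conc (emb x) (Sr circ r p) + smul r (zact circ x (Sr circ r p))"
  by (simp add: Sr_def conc_emb prep_def zact_def act_def smul_lin)

section \<open>Power series with coefficients in h1\<close>

definition ser_one :: "nat \<Rightarrow> ('a list \<Rightarrow>\<^sub>0 'k::comm_ring_1)" where
  "ser_one n = (if n = 0 then wrd [] else 0)"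

definition ser_lmul :: "(nat \<Rightarrow> ('a \<Rightarrow>\<^sub>0 'k::comm_ring_1)) \<Rightarrow> (nat \<Rightarrow> ('a list \<Rightarrow>\<^sub>0 'k)) \<Rightarrow> nat \<Rightarrow> ('a list \<Rightarrow>\<^sub>0 'k)" where
  "ser_lmul x X n = (\<Sum>l\<le>n. conc (emb (x l)) (X (n - l)))"

definition ser_harm :: "('a \<Rightarrow> 'a \<Rightarrow> ('a \<Rightarrow>\<^sub>0 'k::comm_ring_1)) \<Rightarrow> (nat \<Rightarrow> ('a list \<Rightarrow>\<^sub>0 'k)) \<Rightarrow> (nat \<Rightarrow> ('a list \<Rightarrow>\<^sub>0 'k)) \<Rightarrow> nat \<Rightarrow> ('a list \<Rightarrow>\<^sub>0 'k)" where
  "ser_harm circ X Y n = (\<Sum>j\<le>n. harm circ (X j) (Y (n - j)))"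

definition ser_circ :: "('a \<Rightarrow> 'a \<Rightarrow> ('a \<Rightarrow>\<^sub>0 'k::comm_ring_1)) \<Rightarrow> (nat \<Rightarrow> ('a \<Rightarrow>\<^sub>0 'k)) \<Rightarrow> (nat \<Rightarrow> ('a \<Rightarrow>\<^sub>0 'k)) \<Rightarrow> nat \<Rightarrow> ('a \<Rightarrow>\<^sub>0 'k)" where
  "ser_circ circ x y l = (\<Sum>i\<le>l. zcirc circ (x i) (y (l - i)))"

definition ser_monom :: "'b \<Rightarrow> nat \<Rightarrow> nat \<Rightarrow> 'b::zero" where
  "ser_monom x k l = (if l = k then x else 0)"

text \<open>The substitution u \<mapsto> r u.\<close>

definition ser_scale :: "'k \<Rightarrow> (nat \<Rightarrow> ('b \<Rightarrow>\<^sub>0 'k::comm_ring_1)) \<Rightarrow> nat \<Rightarrow> ('b \<Rightarrow>\<^sub>0 'k)" where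
  "ser_scale r X k = smul (r ^ k) (X k)"

lemma ser_lmul_add_right: "ser_lmul x (X + Y) = ser_lmul x X + ser_lmul x Y"
  by (rule ext) (simp add: ser_lmul_def sum.distrib)

lemma ser_lmul_diff_right: "ser_lmul x (X - Y) = ser_lmul x X - ser_lmul x Y"
  by (rule ext) (simp add: ser_lmul_def sum_subtractf)

lemma ser_lmul_add_left: "ser_lmul (x + y) X = ser_lmul x X + ser_lmul y X"
  by (rule ext) (simp add: ser_lmul_def sum.distrib)

lemma ser_lmul_zero_left: "ser_lmul 0 X = 0"
  by (rule ext) (simp add: ser_lmul_def)

lemma ser_lmul_monom:
  "ser_lmul (ser_monom x k) X n = (if k \<le> n then conc (emb x) (X (n - k)) else 0)"
proof -
  have "ser_lmul (ser_monom x k) X n = (\<Sum>l\<le>n. if l = k then conc (emb x) (X (n - k)) else 0)"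
    unfolding ser_lmul_def by (rule sum.cong) (auto simp: ser_monom_def)
  then show ?thesis by simp
qed

lemma ser_circ_monom:
  "ser_circ circ (ser_monom x k) y n = (if k \<le> n then zcirc circ x (y (n - k)) else 0)"
proof -
  have "ser_circ circ (ser_monom x k) y n = (\<Sum>l\<le>n. if l = k then zcirc circ x (y (n - k)) else 0)"
    unfolding ser_circ_def by (rule sum.cong) (auto simp: ser_monom_def)
  then show ?thesis by simp
qed

lemma ser_scale_monom: "ser_scale r (ser_monom x k) = ser_monom (smul (r ^ k) x) k"
  by (rule ext) (simp add: ser_scale_def ser_monom_def)

lemma ser_harm_add_left: "ser_harm circ (X + X') Y = ser_harm circ X Y + ser_harm circ X' Y"
  by (rule ext) (simp add: ser_harm_def sum.distrib)

lemma ser_harm_add_right: "ser_harm circ X (Y + Y') = ser_harm circ X Y + ser_harm circ X Y'"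
  by (rule ext) (simp add: ser_harm_def sum.distrib)

lemma ser_harm_one_left: "ser_harm circ ser_one Y = Y"
proof (rule ext)
  fix n
  have "ser_harm circ ser_one Y n = (\<Sum>j\<le>n. if j = 0 then Y n else 0)"
    unfolding ser_harm_def by (rule sum.cong) (auto simp: ser_one_def)
  then show "ser_harm circ ser_one Y n = Y n" by simp
qed

lemma ser_harm_one_right: "ser_harm circ X ser_one = X"
proof (rule ext)
  fix n
  have "ser_harm circ X ser_one n = (\<Sum>j\<le>n. if j = n then X n else 0)"
    unfolding ser_harm_def by (rule sum.cong) (auto simp: ser_one_def)
  then show "ser_harm circ X ser_one n = X n" by simp
qed

lemma sum_atMost_nested3_eq_Sigma:
  fixes n :: nat and g1 :: "nat \<Rightarrow> nat" and g2 :: "nat \<Rightarrow> nat \<Rightarrow> nat"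
  shows "(\<Sum>a\<le>n. \<Sum>b\<le>g1 a. \<Sum>c\<le>g2 a b. f a b c) =
   (\<Sum>(a,b,c)\<in>{(a,b,c). a \<le> n \<and> b \<le> g1 a \<and> c \<le> g2 a b}. f a b c)"
proof -
  have "(\<Sum>a\<le>n. \<Sum>b\<le>g1 a. \<Sum>c\<le>g2 a b. f a b c) =
        (\<Sum>a\<le>n. \<Sum>(b,c)\<in>(SIGMA b:{..g1 a}. {..g2 a b}). f a b c)"
    by (subst sum.Sigma) auto
  also have "\<dots> = (\<Sum>(a,bc)\<in>(SIGMA a:{..n}. (SIGMA b:{..g1 a}. {..g2 a b})). case bc of (b,c) \<Rightarrow> f a b c)"
    by (subst sum.Sigma) (auto simp: case_prod_unfold)
  also have "\<dots> = (\<Sum>(a,b,c)\<in>{(a,b,c). a \<le> n \<and> b \<le> g1 a \<and> c \<le> g2 a b}. f a b c)"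
    by (rule sum.cong) (auto simp: case_prod_unfold)
  finally show ?thesis .
qed

text \<open>Three regroupings of \<Sum>_{l+i+m+k=n} F l i m k, one for each of the three terms of harm_conc_emb.\<close>

lemma sum_quadruple_regroup_fst:
  "(\<Sum>j\<le>(n::nat). \<Sum>l\<le>j. \<Sum>m\<le>n-j. F l (j-l) m (n-j-m)) =
   (\<Sum>l\<le>n. \<Sum>i\<le>n-l. \<Sum>m\<le>n-l-i. F l i m (n-l-i-m))"
  unfolding sum_atMost_nested3_eq_Sigma
  by (rule sum.reindex_bij_witness[where j="\<lambda>(j,l,m). (l, j-l, m)" and i="\<lambda>(l,i,m). (l+i, l, m)"])
     (auto simp: add.commute)

lemma sum_quadruple_regroup_third:
  "(\<Sum>j\<le>(n::nat). \<Sum>l\<le>j. \<Sum>m\<le>n-j. F l (j-l) m (n-j-m)) =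
   (\<Sum>m\<le>n. \<Sum>j\<le>n-m. \<Sum>l\<le>j. F l (j-l) m (n-m-j))"
  unfolding sum_atMost_nested3_eq_Sigma
  by (rule sum.reindex_bij_witness[where j="\<lambda>(j,l,m). (m, j, l)" and i="\<lambda>(m,j,l). (j, l, m)"])
     (auto simp: add.commute)

lemma sum_quadruple_regroup_fst_third:
  "(\<Sum>j\<le>(n::nat). \<Sum>l\<le>j. \<Sum>m\<le>n-j. F l (j-l) m (n-j-m)) =
   (\<Sum>s\<le>n. \<Sum>l\<le>s. \<Sum>i\<le>n-s. F l i (s-l) (n-s-i))"
  unfolding sum_atMost_nested3_eq_Sigma
  by (rule sum.reindex_bij_witness[where j="\<lambda>(j,l,m). (l+m, l, j-l)" and i="\<lambda>(s,l,t). (l+t, l, s-l)"])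
     (auto simp: add.commute)

lemma ser_harm_lmul_lmul:
  "ser_harm circ (ser_lmul x X) (ser_lmul y Y) =
     ser_lmul x (ser_harm circ X (ser_lmul y Y)) + ser_lmul y (ser_harm circ (ser_lmul x X) Y)
     + ser_lmul (ser_circ circ x y) (ser_harm circ X Y)"
proof (rule ext)
  fix n
  define T1 where "T1 = (\<lambda>l i m k. conc (emb (x l)) (harm circ (X i) (conc (emb (y m)) (Y k))))"
  define T2 where "T2 = (\<lambda>l i m k. conc (emb (y m)) (harm circ (conc (emb (x l)) (X i)) (Y k)))"
  define T3 where "T3 = (\<lambda>l i m k. conc (emb (zcirc circ (x l) (y m))) (harm circ (X i) (Y k)))"
  have "ser_harm circ (ser_lmul x X) (ser_lmul y Y) n =
     (\<Sum>j\<le>n. \<Sum>l\<le>j. \<Sum>m\<le>n-j. T1 l (j-l) m (n-j-m) + T2 l (j-l) m (n-j-m) + T3 l (j-l) m (n-j-m))"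
    by (simp add: ser_harm_def ser_lmul_def harm_conc_emb T1_def T2_def T3_def harm_sum_sum
        del: harm_sum_left harm_sum_right)
  also have "\<dots> = (\<Sum>j\<le>n. \<Sum>l\<le>j. \<Sum>m\<le>n-j. T1 l (j-l) m (n-j-m))
      + (\<Sum>j\<le>n. \<Sum>l\<le>j. \<Sum>m\<le>n-j. T2 l (j-l) m (n-j-m))
      + (\<Sum>j\<le>n. \<Sum>l\<le>j. \<Sum>m\<le>n-j. T3 l (j-l) m (n-j-m))"
    by (simp only: sum.distrib)
  also have "(\<Sum>j\<le>n. \<Sum>l\<le>j. \<Sum>m\<le>n-j. T1 l (j-l) m (n-j-m)) = ser_lmul x (ser_harm circ X (ser_lmul y Y)) n"
    by (simp only: sum_quadruple_regroup_fst[of T1 n]) (simp add: T1_def ser_lmul_def ser_harm_def)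
  also have "(\<Sum>j\<le>n. \<Sum>l\<le>j. \<Sum>m\<le>n-j. T2 l (j-l) m (n-j-m)) = ser_lmul y (ser_harm circ (ser_lmul x X) Y) n"
    by (simp only: sum_quadruple_regroup_third[of T2 n]) (simp add: T2_def ser_lmul_def ser_harm_def)
  also have "(\<Sum>j\<le>n. \<Sum>l\<le>j. \<Sum>m\<le>n-j. T3 l (j-l) m (n-j-m)) = ser_lmul (ser_circ circ x y) (ser_harm circ X Y) n"
    by (simp only: sum_quadruple_regroup_fst_third[of T3 n])
       (simp add: T3_def ser_lmul_def ser_harm_def ser_circ_def conc_sum_sum
        del: conc_sum_left conc_sum_right)
  finally show "ser_harm circ (ser_lmul x X) (ser_lmul y Y) n =
     (ser_lmul x (ser_harm circ X (ser_lmul y Y)) + ser_lmul y (ser_harm circ (ser_lmul x X) Y)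
      + ser_lmul (ser_circ circ x y) (ser_harm circ X Y)) n"
    by simp
qed

lemma ser_geometric_unique:
  assumes "x 0 = 0" and X: "X = ser_one + ser_lmul x X" and Y: "Y = ser_one + ser_lmul x Y"
  shows "X = Y"
proof (rule ext)
  fix n show "X n = Y n"
  proof (induction n rule: less_induct)
    case (less n)
    have "X n = ser_one n + (\<Sum>l\<le>n. conc (emb (x l)) (X (n - l)))"
      by (subst X) (simp add: ser_lmul_def)
    also have "(\<Sum>l\<le>n. conc (emb (x l)) (X (n - l))) = (\<Sum>l\<le>n. conc (emb (x l)) (Y (n - l)))"
    proof (rule sum.cong)
      fix l assume "l \<in> {..n}"
      then show "conc (emb (x l)) (X (n - l)) = conc (emb (x l)) (Y (n - l))"
        using less \<open>x 0 = 0\<close> by (cases "l = 0") auto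
    qed simp
    also have "ser_one n + (\<Sum>l\<le>n. conc (emb (x l)) (Y (n - l))) = Y n"
      by (subst (2) Y) (simp add: ser_lmul_def)
    finally show ?case .
  qed
qed

lemma ser_harm_geometric:
  assumes X: "X = ser_one + ser_lmul x X" and Y: "Y = ser_one + ser_lmul y Y"
  shows "ser_harm circ X Y = ser_one + ser_lmul (x + y + ser_circ circ x y) (ser_harm circ X Y)"
proof -
  define Q where "Q = ser_harm circ X Y"
  have Q_X: "ser_harm circ X (ser_lmul y Y) = Q - X"
    using arg_cong[OF Y, of "ser_harm circ X"]
    by (simp add: Q_def ser_harm_add_right ser_harm_one_right)
  have Q_Y: "ser_harm circ (ser_lmul x X) Y = Q - Y"
    using arg_cong[OF X, of "\<lambda>Z. ser_harm circ Z Y"]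
    by (simp add: Q_def ser_harm_add_left ser_harm_one_left)
  have "Q - X = ser_harm circ (ser_one + ser_lmul x X) (ser_lmul y Y)"
    by (simp flip: X Q_X)
  also have "\<dots> = ser_lmul y Y + ser_lmul x (Q - X) + ser_lmul y (Q - Y) + ser_lmul (ser_circ circ x y) Q"
    by (simp add: ser_harm_add_left ser_harm_one_left ser_harm_lmul_lmul Q_X Q_Y Q_def add.assoc)
  finally have "Q = (X - ser_lmul x X) + ser_lmul (x + y + ser_circ circ x y) Q"
    by (simp add: ser_lmul_diff_right ser_lmul_add_left algebra_simps)
  also have "X - ser_lmul x X = ser_one"
    using X by (metis add_diff_cancel)
  finally show ?thesis unfolding Q_def .
qed

lemma ser_harm_lmul_geometric:
  assumes A: "A = ser_lmul \<alpha> C + ser_lmul \<gamma> A" and G: "G = ser_one + ser_lmul \<beta> G"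
    and inverse: "\<beta> + \<gamma> + ser_circ circ \<gamma> \<beta> = 0"
  shows "ser_harm circ A G = ser_lmul (\<alpha> + ser_circ circ \<alpha> \<beta>) (ser_harm circ C G)"
proof -
  define H where "H = ser_harm circ A G"
  define K where "K = ser_harm circ C G"
  define P1 where "P1 = ser_harm circ (ser_lmul \<alpha> C) G"
  define P2 where "P2 = ser_harm circ (ser_lmul \<gamma> A) G"
  have H_A: "ser_harm circ A (ser_lmul \<beta> G) = H - A"
    using arg_cong[OF G, of "ser_harm circ A"]
    by (simp add: H_def ser_harm_add_right ser_harm_one_right)
  have K_C: "ser_harm circ C (ser_lmul \<beta> G) = K - C"
    using arg_cong[OF G, of "ser_harm circ C"]
    by (simp add: K_def ser_harm_add_right ser_harm_one_right)
  have P: "ser_lmul \<beta> H = ser_lmul \<beta> P1 + ser_lmul \<beta> P2"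
    using arg_cong[OF A, of "\<lambda>Z. ser_lmul \<beta> (ser_harm circ Z G)"]
    by (simp add: H_def P1_def P2_def ser_harm_add_left ser_lmul_add_right)
  have "H - A = ser_harm circ (ser_lmul \<alpha> C + ser_lmul \<gamma> A) (ser_lmul \<beta> G)"
    unfolding H_A[symmetric] using A by (rule arg_cong)
  also have "\<dots> = (ser_lmul \<alpha> (K - C) + ser_lmul \<beta> P1 + ser_lmul (ser_circ circ \<alpha> \<beta>) K)
      + (ser_lmul \<gamma> (H - A) + ser_lmul \<beta> P2 + ser_lmul (ser_circ circ \<gamma> \<beta>) H)"
    by (simp add: ser_harm_add_left ser_harm_lmul_lmul H_A K_C H_def K_def P1_def P2_def)
  finally have "H = (A - ser_lmul \<alpha> C - ser_lmul \<gamma> A) + ser_lmul (\<alpha> + ser_circ circ \<alpha> \<beta>) K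
      + ser_lmul (\<beta> + \<gamma> + ser_circ circ \<gamma> \<beta>) H"
    by (simp add: ser_lmul_diff_right ser_lmul_add_left ser_lmul_add_right P algebra_simps)
  also have "A - ser_lmul \<alpha> C - ser_lmul \<gamma> A = 0"
    using A by (metis add_diff_cancel_left' diff_self)
  also have "ser_lmul (\<beta> + \<gamma> + ser_circ circ \<gamma> \<beta>) H = 0"
    by (simp only: inverse ser_lmul_zero_left)
  finally show ?thesis
    by (simp only: H_def K_def add_0_left add_0_right)
qed

lemma ser_scale_geometric:
  assumes X: "X = ser_one + ser_lmul x X"
  shows "ser_scale r X = ser_one + ser_lmul (ser_scale r x) (ser_scale r X)"
proof (rule ext)
  fix k
  have "smul (r ^ k) (ser_lmul x X k) = ser_lmul (ser_scale r x) (ser_scale r X) k"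
    unfolding ser_lmul_def smul_sum
  proof (rule sum.cong)
    fix l assume "l \<in> {..k}"
    then have "r ^ l * r ^ (k - l) = r ^ k" by (simp flip: power_add)
    then show "smul (r ^ k) (conc (emb (x l)) (X (k - l))) =
        conc (emb (ser_scale r x l)) (ser_scale r X (k - l))"
      by (simp add: ser_scale_def mult.commute)
  qed simp
  moreover have "smul (r ^ k) (ser_one k) = ser_one k" by (simp add: ser_one_def)
  ultimately show "ser_scale r X k = (ser_one + ser_lmul (ser_scale r x) (ser_scale r X)) k"
    using fun_cong[OF X, of k] by (simp add: ser_scale_def smul_add_right)
qed

section \<open>The series entering the identity\<close>

primrec circ_iter :: "('a \<Rightarrow> 'a \<Rightarrow> ('a \<Rightarrow>\<^sub>0 'k::comm_ring_1)) \<Rightarrow> ('a \<Rightarrow>\<^sub>0 'k) \<Rightarrow> ('a \<Rightarrow>\<^sub>0 'k) \<Rightarrow> nat \<Rightarrow> ('a \<Rightarrow>\<^sub>0 'k)" where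
  "circ_iter circ b x 0 = x"
| "circ_iter circ b x (Suc l) = circ_iter circ b (zcirc circ x b) l"

text \<open>The ratio e = \<Sum>_{l\<ge>1} s^(l-1) b^\<circ>l u^l with S^s(1/(1 - b u)) = 1/(1 - e).\<close>

definition Sr_ratio :: "('a \<Rightarrow> 'a \<Rightarrow> ('a \<Rightarrow>\<^sub>0 'k::comm_ring_1)) \<Rightarrow> ('a \<Rightarrow>\<^sub>0 'k) \<Rightarrow> 'k \<Rightarrow> nat \<Rightarrow> ('a \<Rightarrow>\<^sub>0 'k)" where
  "Sr_ratio circ b s l = (if l = 0 then 0 else smul (s ^ (l - 1)) (circ_iter circ b b (l - 1)))"

text \<open>The coefficients of 1/(1 + b r u) a 1/(1 - b (1-r) u).\<close>

definition sandwich_ser :: "('a \<Rightarrow>\<^sub>0 'k::comm_ring_1) \<Rightarrow> ('a \<Rightarrow>\<^sub>0 'k) \<Rightarrow> 'k \<Rightarrow> nat \<Rightarrow> ('a list \<Rightarrow>\<^sub>0 'k)" where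
  "sandwich_ser b a r n =
     (\<Sum>i\<le>n. smul ((- r) ^ i * (1 - r) ^ (n - i)) (conc (zpow b i) (conc (emb a) (zpow b (n - i)))))"

lemma zpow_geometric: "zpow b = ser_one + ser_lmul (ser_monom b 1) (zpow b)"
proof (rule ext)
  fix n show "zpow b n = (ser_one + ser_lmul (ser_monom b 1) (zpow b)) n"
    by (cases n) (simp_all add: ser_lmul_monom ser_one_def)
qed

lemma sandwich_ser_rec:
  "sandwich_ser b a r =
     ser_lmul (ser_monom a 0) (ser_scale (1 - r) (zpow b)) + ser_lmul (ser_monom (smul (- r) b) 1) (sandwich_ser b a r)"
proof (rule ext)
  fix n
  show "sandwich_ser b a r n = (ser_lmul (ser_monom a 0) (ser_scale (1 - r) (zpow b))
      + ser_lmul (ser_monom (smul (- r) b) 1) (sandwich_ser b a r)) n"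
  proof (cases n)
    case 0
    then show ?thesis by (simp add: ser_lmul_monom sandwich_ser_def ser_scale_def)
  next
    case (Suc m)
    have "sandwich_ser b a r (Suc m) = smul ((1 - r) ^ Suc m) (conc (emb a) (zpow b (Suc m)))
       + (\<Sum>i\<le>m. smul ((- r) ^ Suc i * (1 - r) ^ (m - i)) (conc (zpow b (Suc i)) (conc (emb a) (zpow b (m - i)))))"
      unfolding sandwich_ser_def by (simp only: sum.atMost_Suc_shift) simp
    also have "(\<Sum>i\<le>m. smul ((- r) ^ Suc i * (1 - r) ^ (m - i)) (conc (zpow b (Suc i)) (conc (emb a) (zpow b (m - i)))))
        = conc (emb (smul (- r) b)) (sandwich_ser b a r m)"
      unfolding sandwich_ser_def by (simp add: smul_sum conc_assoc mult_ac)
    finally show ?thesis using Suc by (simp add: ser_lmul_monom ser_scale_def)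
  qed
qed

lemma sum_triangle_eq_ser_harm_sandwich_ser:
  "(\<Sum>(i, j)\<in>{(i, j). i + j \<le> q}.
       smul ((-1) ^ i * r ^ (q - j) * (1 - r) ^ j)
         (harm circ (conc (zpow b i) (conc (emb a) (zpow b j))) (Sr circ 1 (zpow b (q - i - j))))) =
   ser_harm circ (sandwich_ser b a r) (ser_scale r (\<lambda>n. Sr circ 1 (zpow b n))) q"
proof -
  let ?H = "\<lambda>i j. harm circ (conc (zpow b i) (conc (emb a) (zpow b j)))"
  have "(\<Sum>(i, j)\<in>{(i, j). i + j \<le> q}. smul ((-1) ^ i * r ^ (q - j) * (1 - r) ^ j)
          (?H i j (Sr circ 1 (zpow b (q - i - j))))) =
      (\<Sum>k\<le>q. \<Sum>i\<le>k. smul ((-1) ^ i * r ^ (q - (k - i)) * (1 - r) ^ (k - i))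
          (?H i (k - i) (Sr circ 1 (zpow b (q - i - (k - i))))))"
    by (rule sum.triangle_reindex_eq)
  also have "\<dots> = (\<Sum>k\<le>q. \<Sum>i\<le>k. smul ((- r) ^ i * (1 - r) ^ (k - i) * r ^ (q - k))
          (?H i (k - i) (Sr circ 1 (zpow b (q - k)))))"
  proof (rule sum.cong[OF refl], rule sum.cong[OF refl])
    fix k i assume "k \<in> {..q}" "i \<in> {..k}"
    then have "q - i - (k - i) = q - k" and "q - (k - i) = i + (q - k)" by auto
    moreover have "(-1) ^ i * r ^ (i + (q - k)) * (1 - r) ^ (k - i) = (- r) ^ i * (1 - r) ^ (k - i) * r ^ (q - k)"
      unfolding power_add power_minus[of r] by (simp only: mult_ac)
    ultimately show "smul ((-1) ^ i * r ^ (q - (k - i)) * (1 - r) ^ (k - i)) (?H i (k - i) (Sr circ 1 (zpow b (q - i - (k - i))))) =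
        smul ((- r) ^ i * (1 - r) ^ (k - i) * r ^ (q - k)) (?H i (k - i) (Sr circ 1 (zpow b (q - k))))"
      by (simp only:)
  qed
  also have "\<dots> = ser_harm circ (sandwich_ser b a r) (ser_scale r (\<lambda>n. Sr circ 1 (zpow b n))) q"
    by (simp add: ser_harm_def sandwich_ser_def ser_scale_def smul_sum mult_ac)
  finally show ?thesis .
qed

context
  fixes circ :: "'a \<Rightarrow> 'a \<Rightarrow> ('a \<Rightarrow>\<^sub>0 'k::comm_ring_1)"
  assumes zcirc_assoc: "\<And>x y z. zcirc circ (zcirc circ x y) z = zcirc circ x (zcirc circ y z)"
begin

lemma zcirc_circ_iter: "zcirc circ x (circ_iter circ b y m) = circ_iter circ b (zcirc circ x y) m"
  by (induction m arbitrary: y) (simp_all add: zcirc_assoc)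

lemma Sr_conc_emb_zpow:
  "Sr circ s (conc (emb x) (zpow b n)) =
     ser_lmul (ser_scale s (circ_iter circ b x)) (\<lambda>n. Sr circ s (zpow b n)) n"
proof (induction n arbitrary: x)
  case 0
  show ?case using Sr_conc_emb[of circ s x "wrd []"] by (simp add: ser_lmul_def ser_scale_def)
next
  case (Suc n)
  let ?T = "\<lambda>n. Sr circ s (zpow b n)"
  have "zact circ x (?T (Suc n)) = Sr circ s (conc (emb (zcirc circ x b)) (zpow b n))"
    by (simp add: Sr_conc_emb zact_conc_emb zact_zact[OF zcirc_assoc])
  also have "\<dots> = ser_lmul (ser_scale s (circ_iter circ b (zcirc circ x b))) ?T n"
    by (rule Suc.IH)
  finally have zact_T: "zact circ x (?T (Suc n)) = \<dots>" .
  have "Sr circ s (conc (emb x) (zpow b (Suc n))) = conc (emb x) (?T (Suc n)) + smul s (zact circ x (?T (Suc n)))"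
    by (rule Sr_conc_emb)
  also have "\<dots> = ser_lmul (ser_scale s (circ_iter circ b x)) ?T (Suc n)"
    unfolding zact_T ser_lmul_def by (simp only: sum.atMost_Suc_shift) (simp add: ser_scale_def smul_sum)
  finally show ?case .
qed

lemma Sr_zpow_geometric:
  "(\<lambda>n. Sr circ s (zpow b n)) = ser_one + ser_lmul (Sr_ratio circ b s) (\<lambda>n. Sr circ s (zpow b n))"
proof (rule ext)
  fix n
  show "Sr circ s (zpow b n) = (ser_one + ser_lmul (Sr_ratio circ b s) (\<lambda>n. Sr circ s (zpow b n))) n"
  proof (cases n)
    case 0
    then show ?thesis by (simp add: ser_one_def ser_lmul_def Sr_ratio_def)
  next
    case (Suc m)
    have "ser_lmul (Sr_ratio circ b s) (\<lambda>n. Sr circ s (zpow b n)) (Suc m) =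
        ser_lmul (ser_scale s (circ_iter circ b b)) (\<lambda>n. Sr circ s (zpow b n)) m"
      unfolding ser_lmul_def by (simp only: sum.atMost_Suc_shift) (simp add: Sr_ratio_def ser_scale_def)
    then show ?thesis
      using Sr_conc_emb_zpow[of s b b m] Suc by (simp add: ser_one_def)
  qed
qed

lemma circ_iter_Suc_self: "zcirc circ b (circ_iter circ b b k) = circ_iter circ b b (Suc k)"
  by (simp add: zcirc_circ_iter)

lemma Sr_ratio_circ_inverse:
  "ser_scale r (Sr_ratio circ b 1) + ser_monom (smul (- r) b) 1
     + ser_circ circ (ser_monom (smul (- r) b) 1) (ser_scale r (Sr_ratio circ b 1)) = 0"
proof (rule ext)
  fix l
  consider "l = 0" | "l = 1" | k where "l = Suc (Suc k)"
    by (metis One_nat_def not0_implies_Suc)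
  then show "(ser_scale r (Sr_ratio circ b 1) + ser_monom (smul (- r) b) 1
     + ser_circ circ (ser_monom (smul (- r) b) 1) (ser_scale r (Sr_ratio circ b 1))) l = 0 l"
    by cases (simp_all add: ser_circ_monom ser_scale_def Sr_ratio_def ser_monom_def
        circ_iter_Suc_self smul_minus_left smul_minus_right mult_ac)
qed

lemma Sr_ratio_circ_sum:
  "ser_monom (smul (1 - r) b) 1 + ser_scale r (Sr_ratio circ b 1)
     + ser_circ circ (ser_monom (smul (1 - r) b) 1) (ser_scale r (Sr_ratio circ b 1)) = Sr_ratio circ b r"
proof (rule ext)
  fix l
  consider "l = 0" | "l = 1" | k where "l = Suc (Suc k)"
    by (metis One_nat_def not0_implies_Suc)
  then show "(ser_monom (smul (1 - r) b) 1 + ser_scale r (Sr_ratio circ b 1)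
     + ser_circ circ (ser_monom (smul (1 - r) b) 1) (ser_scale r (Sr_ratio circ b 1))) l = Sr_ratio circ b r l"
    by cases (simp_all add: ser_circ_monom ser_scale_def Sr_ratio_def ser_monom_def
        circ_iter_Suc_self flip: smul_add_left add: algebra_simps)
qed

lemma monom_circ_Sr_ratio:
  "ser_monom a 0 + ser_circ circ (ser_monom a 0) (ser_scale r (Sr_ratio circ b 1)) =
     ser_scale r (circ_iter circ b a)"
proof (rule ext)
  fix l
  show "(ser_monom a 0 + ser_circ circ (ser_monom a 0) (ser_scale r (Sr_ratio circ b 1))) l =
      ser_scale r (circ_iter circ b a) l"
    by (cases l) (simp_all add: ser_circ_monom ser_scale_def Sr_ratio_def ser_monom_def zcirc_circ_iter)
qed

lemma ser_harm_sandwich_ser: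
  "ser_harm circ (sandwich_ser b a r) (ser_scale r (\<lambda>n. Sr circ 1 (zpow b n))) =
     ser_lmul (ser_scale r (circ_iter circ b a)) (\<lambda>n. Sr circ r (zpow b n))"
proof -
  let ?C = "ser_scale (1 - r) (zpow b)"
  let ?G = "ser_scale r (\<lambda>n. Sr circ 1 (zpow b n))"
  have C: "?C = ser_one + ser_lmul (ser_monom (smul (1 - r) b) 1) ?C"
    using ser_scale_geometric[OF zpow_geometric, of "1 - r" b] unfolding ser_scale_monom power_one_right .
  have G: "?G = ser_one + ser_lmul (ser_scale r (Sr_ratio circ b 1)) ?G"
    by (rule ser_scale_geometric[OF Sr_zpow_geometric])
  have CG_geometric: "ser_harm circ ?C ?G = ser_one + ser_lmul (Sr_ratio circ b r) (ser_harm circ ?C ?G)"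
    using ser_harm_geometric[OF C G, of circ] unfolding Sr_ratio_circ_sum .
  have "Sr_ratio circ b r 0 = 0"
    by (simp add: Sr_ratio_def)
  then have CG: "ser_harm circ ?C ?G = (\<lambda>n. Sr circ r (zpow b n))"
    using CG_geometric Sr_zpow_geometric by (rule ser_geometric_unique)
  show ?thesis
    using ser_harm_lmul_geometric[OF sandwich_ser_rec G Sr_ratio_circ_inverse]
    by (simp only: CG monom_circ_Sr_ratio)
qed

end

theorem proposition2p7:
  fixes circ :: "'a \<Rightarrow> 'a \<Rightarrow> ('a \<Rightarrow>\<^sub>0 'k::comm_ring_1)"
    and r :: 'k and a1 a2 :: "'a \<Rightarrow>\<^sub>0 'k" and q :: nat
  assumes Qalg: "\<And>n::nat. n > 0 \<Longrightarrow> of_nat n dvd (1::'k)"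
    and circ: "comm_circ circ"
    and q: "q > 0"
  shows "Sr circ r (conc (emb a1) (zpow a2 q)) =
    (\<Sum>(i, j)\<in>{(i, j). i + j \<le> q}.
       smul ((-1) ^ i * r ^ (q - j) * (1 - r) ^ j)
         (harm circ (conc (zpow a2 i) (conc (emb a1) (zpow a2 j)))
                    (Sr circ 1 (zpow a2 (q - i - j)))))"
proof -
  have assoc: "\<And>x y z. zcirc circ (zcirc circ x y) z = zcirc circ x (zcirc circ y z)"
    using circ by (simp add: comm_circ_def)
  have "Sr circ r (conc (emb a1) (zpow a2 q)) =
      ser_lmul (ser_scale r (circ_iter circ a2 a1)) (\<lambda>n. Sr circ r (zpow a2 n)) q"
    by (rule Sr_conc_emb_zpow[OF assoc])
  also have "\<dots> = ser_harm circ (sandwich_ser a2 a1 r) (ser_scale r (\<lambda>n. Sr circ 1 (zpow a2 n))) q"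
    by (simp only: ser_harm_sandwich_ser[OF assoc])
  finally show ?thesis
    by (simp only: sum_triangle_eq_ser_harm_sandwich_ser)
qed

end
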